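(* Every floor-randomized, left-continuous mechanism satisfying strict DD is undominated.
   Context: Setting. Let $\Theta=[\underline\theta,\overline\theta]$ with $0<\underline\theta<\overline\theta$. Let $c>0$ and let $P:\mathbb R_+\to\mathbb R_+$ be continuous and strictly decreasing with $P(\overline q)=0$ for some $\overline q>0$. Put $V(q)=\int_0^q P(z)\,dz$ and $\mathrm{TS}(\theta,q)=V(q)-c-\theta q$ for $q>0$, $\mathrm{TS}(\theta,0)=0$. Assume (A2): $\mathrm{TS}(\overline\theta,P^{-1}(\overline\theta))>0$. A mechanism is a triple $M=(r,q,u)$ of functions $r:\Theta\to[0,1]$, $q:\Theta\to[0,\overline q]$, $u:\Theta\to\mathbb R$ with $q(\theta)=0$ if and only if $r(\theta)=0$. It is IC if $u(\theta)\ge u(\theta')+(\theta'-\theta)q(\theta')r(\theta')$ for all $\theta,\theta'\in\Theta$, and IR if $u(\theta)\ge 0$ for all $\theta$. (Known fact: $M$ is IC iff $\theta\mapsto q(\theta)r(\theta)$ is nonincreasing and $u(\theta)=u(\overline\theta)+\int_\theta^{\overline\theta}q(z)r(z)\,dz$ for all $\theta$; an IC mechanism is IR iff $u(\overline\theta)\ge0$.) Fix $\alpha\in[0,1)$. The regulator's surplus at $\theta$ is $\mathrm{RS}_\alpha(\theta,M)=r(\theta)\,\mathrm{TS}(\theta,q(\theta))-(1-\alpha)u(\theta)$. An IC and IR mechanism $\tilde M$ dominates an IC and IR mechanism $M$ if $\mathrm{RS}_\alpha(\theta,\tilde M)\ge \mathrm{RS}_\alpha(\theta,M)$ for all $\theta\in\Theta$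 with strict inequality for some $\theta$; $M$ is undominated if it is IC, IR and not dominated by any IC and IR mechanism. The quantity floor $\hat q$ is the unique $q>0$ with $V(q)-qP(q)=c$. A mechanism $(r,q,u)$ is floor-randomized if it is IC, IR, $u(\overline\theta)=0$, and $\Theta$ can be partitioned into three pairwise disjoint (possibly empty) intervals $\Theta_1,\Theta_{01},\Theta_0$, with every element of $\Theta_0$ larger than every element of $\Theta_{01}$ and every element of $\Theta_{01}$ larger than every element of $\Theta_1$, such that: $q(\theta)\ge\hat q$ and $r(\theta)=1$ for $\theta\in\Theta_1$; $q(\theta)=\hat q$ and $r(\theta)\in(0,1)$ for $\theta\in\Theta_{01}$; $q(\theta)=r(\theta)=0$ for $\theta\in\Theta_0$. The efficient quantity is $q_e(\theta)=P^{-1}(\theta)$. A mechanism satisfies downward distortion (DD) if $q(\theta)\le q_e(\theta)$ for all $\theta$, with equality at $\theta=\underline\theta$; it satisfies strict DD if moreover $q(\theta)<q_e(\theta)$ for every $\theta>\underline\theta$. A mechanism is left continuous if $\theta\mapsto q(\theta)r(\theta)$ is left continuous at every $\theta\in(\underline\theta,\overline\theta]$. *)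

theory Defs
  imports "HOL-Analysis.Analysis"
begin

(* Type space Theta = [tlo, thi]. A mechanism is a triple (r, q, u) of real functions;
   only their values on Theta matter. *)

definition V :: "(real \<Rightarrow> real) \<Rightarrow> real \<Rightarrow> real" where
  "V P q = integral {0..q} P"

definition TS :: "(real \<Rightarrow> real) \<Rightarrow> real \<Rightarrow> real \<Rightarrow> real \<Rightarrow> real" where
  "TS P c \<theta> q = (if q = 0 then 0 else V P q - c - \<theta> * q)"

definition is_mechanism ::
  "real \<Rightarrow> real \<Rightarrow> real \<Rightarrow> (real \<Rightarrow> real) \<Rightarrow> (real \<Rightarrow> real) \<Rightarrow> (real \<Rightarrow> real) \<Rightarrow> bool" where
  "is_mechanism tlo thi qbar r q u \<longleftrightarrow>
     (\<forall>\<theta>\<in>{tlo..thi}. 0 \<le> r \<theta> \<and> r \<theta> \<le> 1 \<and> 0 \<le> q \<theta> \<and> q \<theta> \<le> qbar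
                   \<and> (q \<theta> = 0 \<longleftrightarrow> r \<theta> = 0))"

definition IC ::
  "real \<Rightarrow> real \<Rightarrow> (real \<Rightarrow> real) \<Rightarrow> (real \<Rightarrow> real) \<Rightarrow> (real \<Rightarrow> real) \<Rightarrow> bool" where
  "IC tlo thi r q u \<longleftrightarrow>
     (\<forall>\<theta>\<in>{tlo..thi}. \<forall>\<theta>'\<in>{tlo..thi}. u \<theta> \<ge> u \<theta>' + (\<theta>' - \<theta>) * q \<theta>' * r \<theta>')"

definition IR :: "real \<Rightarrow> real \<Rightarrow> (real \<Rightarrow> real) \<Rightarrow> bool" where
  "IR tlo thi u \<longleftrightarrow> (\<forall>\<theta>\<in>{tlo..thi}. u \<theta> \<ge> 0)"

definition RS ::
  "(real \<Rightarrow> real) \<Rightarrow> real \<Rightarrow> real \<Rightarrow> real \<Rightarrow> (real \<Rightarrow> real) \<Rightarrow> (real \<Rightarrow> real) \<Rightarrow> (real \<Rightarrow> real) \<Rightarrow> real" where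
  "RS P c \<alpha> \<theta> r q u = r \<theta> * TS P c \<theta> (q \<theta>) - (1 - \<alpha>) * u \<theta>"

definition admissible ::
  "real \<Rightarrow> real \<Rightarrow> real \<Rightarrow> (real \<Rightarrow> real) \<Rightarrow> (real \<Rightarrow> real) \<Rightarrow> (real \<Rightarrow> real) \<Rightarrow> bool" where
  "admissible tlo thi qbar r q u \<longleftrightarrow> is_mechanism tlo thi qbar r q u \<and> IC tlo thi r q u \<and> IR tlo thi u"

definition dominates ::
  "(real \<Rightarrow> real) \<Rightarrow> real \<Rightarrow> real \<Rightarrow> real \<Rightarrow> real \<Rightarrow> real \<Rightarrow>
   (real \<Rightarrow> real) \<Rightarrow> (real \<Rightarrow> real) \<Rightarrow> (real \<Rightarrow> real) \<Rightarrow>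
   (real \<Rightarrow> real) \<Rightarrow> (real \<Rightarrow> real) \<Rightarrow> (real \<Rightarrow> real) \<Rightarrow> bool" where
  "dominates P c qbar \<alpha> tlo thi r' q' u' r q u \<longleftrightarrow>
     admissible tlo thi qbar r' q' u' \<and> admissible tlo thi qbar r q u \<and>
     (\<forall>\<theta>\<in>{tlo..thi}. RS P c \<alpha> \<theta> r' q' u' \<ge> RS P c \<alpha> \<theta> r q u) \<and>
     (\<exists>\<theta>\<in>{tlo..thi}. RS P c \<alpha> \<theta> r' q' u' > RS P c \<alpha> \<theta> r q u)"

definition undominated ::
  "(real \<Rightarrow> real) \<Rightarrow> real \<Rightarrow> real \<Rightarrow> real \<Rightarrow> real \<Rightarrow> real \<Rightarrow>
   (real \<Rightarrow> real) \<Rightarrow> (real \<Rightarrow> real) \<Rightarrow> (real \<Rightarrow> real) \<Rightarrow> bool" where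
  "undominated P c qbar \<alpha> tlo thi r q u \<longleftrightarrow>
     admissible tlo thi qbar r q u \<and>
     \<not> (\<exists>r' q' u'. dominates P c qbar \<alpha> tlo thi r' q' u' r q u)"

definition qfloor :: "(real \<Rightarrow> real) \<Rightarrow> real \<Rightarrow> real \<Rightarrow> real" where
  "qfloor P c qbar = (THE q. q \<in> {0<..qbar} \<and> V P q - q * P q = c)"

definition qeff :: "(real \<Rightarrow> real) \<Rightarrow> real \<Rightarrow> real \<Rightarrow> real" where
  "qeff P qbar \<theta> = (THE q. q \<in> {0..qbar} \<and> P q = \<theta>)"

definition floor_randomized ::
  "(real \<Rightarrow> real) \<Rightarrow> real \<Rightarrow> real \<Rightarrow> real \<Rightarrow> real \<Rightarrow>
   (real \<Rightarrow> real) \<Rightarrow> (real \<Rightarrow> real) \<Rightarrow> (real \<Rightarrow> real) \<Rightarrow> bool" where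
  "floor_randomized P c qbar tlo thi r q u \<longleftrightarrow>
     admissible tlo thi qbar r q u \<and> u thi = 0 \<and>
     (\<exists>T1 T01 T0 :: real set.
        is_interval T1 \<and> is_interval T01 \<and> is_interval T0 \<and>
        T1 \<inter> T01 = {} \<and> T1 \<inter> T0 = {} \<and> T01 \<inter> T0 = {} \<and>
        T1 \<union> T01 \<union> T0 = {tlo..thi} \<and>
        (\<forall>x\<in>T0. \<forall>y\<in>T01. y < x) \<and> (\<forall>x\<in>T01. \<forall>y\<in>T1. y < x) \<and>
        (\<forall>\<theta>\<in>T1. q \<theta> \<ge> qfloor P c qbar \<and> r \<theta> = 1) \<and>
        (\<forall>\<theta>\<in>T01. q \<theta> = qfloor P c qbar \<and> 0 < r \<theta> \<and> r \<theta> < 1) \<and>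
        (\<forall>\<theta>\<in>T0. q \<theta> = 0 \<and> r \<theta> = 0))"

definition strict_DD ::
  "(real \<Rightarrow> real) \<Rightarrow> real \<Rightarrow> real \<Rightarrow> real \<Rightarrow> (real \<Rightarrow> real) \<Rightarrow> bool" where
  "strict_DD P qbar tlo thi q \<longleftrightarrow>
     (\<forall>\<theta>\<in>{tlo..thi}. q \<theta> \<le> qeff P qbar \<theta>) \<and> q tlo = qeff P qbar tlo \<and>
     (\<forall>\<theta>\<in>{tlo<..thi}. q \<theta> < qeff P qbar \<theta>)"

definition left_continuous ::
  "real \<Rightarrow> real \<Rightarrow> (real \<Rightarrow> real) \<Rightarrow> (real \<Rightarrow> real) \<Rightarrow> bool" where
  "left_continuous tlo thi r q \<longleftrightarrow>
     (\<forall>\<theta>\<in>{tlo<..thi}. continuous (at_left \<theta>) (\<lambda>t. q t * r t))"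

end

theory Submission
  imports Defs
begin

text \<open>
  Suppose an admissible \<open>M' = (r', q', u')\<close> weakly dominates \<open>M\<close>. Write \<open>Q = q r\<close>,
  \<open>Q' = q' r'\<close> for the expected quantities and \<open>J = u' - u\<close> for the rent gap. Concavity of
  \<open>V\<close> bounds the surplus gain at every type that trades under \<open>M\<close> by
  \<open>(P(q) - \<theta>)(Q' - Q) - (1 - \<alpha>) J\<close>; the randomization term drops out because the floor
  satisfies \<open>V(q) - q P(q) \<ge> c\<close>. Dominance thus gives \<open>(1 - \<alpha>) J \<le> (P(q) - \<theta>)(Q' - Q)\<close>.
  Together with the incentive constraints \<open>J(\<theta>) - J(\<theta>') \<ge> (\<theta>' - \<theta>)(Q'(\<theta>') - Q(\<theta>))\<close>,
  a negative excursion of \<open>J\<close> ending at \<open>s\<close> would make \<open>J(\<theta>)/(s - \<theta>)\<close> essentially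
  nonincreasing, which left continuity of \<open>Q\<close> at \<open>s\<close> rules out; so \<open>J \<ge> 0\<close>. Strict
  downward distortion then yields \<open>Q' \<ge> Q\<close> above \<open>\<theta>\<^sub>l\<close>, while \<open>P(q(\<theta>\<^sub>l)) = \<theta>\<^sub>l\<close> gives
  \<open>J(\<theta>\<^sub>l) \<le> 0\<close>, and telescoping the incentive constraints gives \<open>J = 0\<close>. Finally
  \<open>J = 0\<close> and left continuity force \<open>Q' = Q\<close>, so \<open>M'\<close> gains nothing anywhere.
\<close>

section \<open>Demand, surplus and the quantity floor\<close>

context
  fixes P :: "real \<Rightarrow> real" and qbar :: real
  assumes P_cont: "continuous_on {0..qbar} P"
    and P_strict_antimono: "\<And>x y. 0 \<le> x \<Longrightarrow> x < y \<Longrightarrow> y \<le> qbar \<Longrightarrow> P y < P x"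
begin

lemma P_antimono: "0 \<le> x \<Longrightarrow> x \<le> y \<Longrightarrow> y \<le> qbar \<Longrightarrow> P y \<le> P x"
  using P_strict_antimono[of x y] by (cases "x = y") auto

lemma P_integrable: "0 \<le> x \<Longrightarrow> y \<le> qbar \<Longrightarrow> P integrable_on {x..y}"
  by (intro integrable_continuous_real continuous_on_subset[OF P_cont]) auto

lemma V_diff_bounds:
  assumes "0 \<le> x" "x \<le> y" "y \<le> qbar"
  shows "(y - x) * P y \<le> V P y - V P x" "V P y - V P x \<le> (y - x) * P x"
proof -
  have diff: "V P y - V P x = integral {x..y} P"
    using Henstock_Kurzweil_Integration.integral_combine[of 0 x y P] P_integrable[of 0 y] assms
    unfolding V_def by simp
  have int: "P integrable_on {x..y}" using P_integrable assms by auto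
  have "integral {x..y} (\<lambda>_. P y) \<le> integral {x..y} P"
    by (rule integral_le[OF integrable_const_ivl int]) (use P_antimono assms in auto)
  then show "(y - x) * P y \<le> V P y - V P x" using diff assms by (simp add: mult.commute)
  have "integral {x..y} P \<le> integral {x..y} (\<lambda>_. P x)"
    by (rule integral_le[OF int integrable_const_ivl]) (use P_antimono assms in auto)
  then show "V P y - V P x \<le> (y - x) * P x" using diff assms by (simp add: mult.commute)
qed

lemma V_le_tangent:
  assumes "0 \<le> a" "a \<le> qbar" "0 \<le> b" "b \<le> qbar"
  shows "V P a \<le> V P b + P b * (a - b)"
proof (cases "b \<le> a")
  case True then show ?thesis using V_diff_bounds(2)[of b a] assms by (simp add: mult.commute)
next
  case False then show ?thesis using V_diff_bounds(1)[of a b] assms by (simp add: algebra_simps)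
qed

lemma consumer_surplus_strict_mono:
  assumes "0 < x" "x < y" "y \<le> qbar"
  shows "V P x - x * P x < V P y - y * P y"
proof -
  have "x * P y < x * P x" using P_strict_antimono[of x y] assms by simp
  moreover have "y * P y - x * P y \<le> V P y - V P x"
    using V_diff_bounds(1)[of x y] assms by (simp add: left_diff_distrib)
  ultimately show ?thesis by linarith
qed

lemma continuous_on_V: "continuous_on {0..qbar} (V P)"
  unfolding V_def by (rule indefinite_integral_continuous_1, rule P_integrable) auto

lemma qfloor_spec:
  assumes "c > 0" "qe \<in> {0..qbar}" "TS P c (P qe) qe > 0"
  shows "0 < qfloor P c qbar" "qfloor P c qbar \<le> qbar"
    "V P (qfloor P c qbar) - qfloor P c qbar * P (qfloor P c qbar) = c"
proof -
  let ?cs = "\<lambda>x. V P x - x * P x"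
  have "qe \<noteq> 0" using assms unfolding TS_def by auto
  then have "c < ?cs qe" using assms unfolding TS_def by (simp add: mult.commute)
  moreover have "continuous_on {0..qe} ?cs"
    using assms by (intro continuous_intros continuous_on_subset[OF continuous_on_V]
        continuous_on_subset[OF P_cont]) auto
  ultimately obtain x where x: "0 \<le> x" "x \<le> qe" "?cs x = c"
    using IVT'[of ?cs 0 c qe] assms by (auto simp: V_def)
  have "x \<noteq> 0" using x assms by (auto simp: V_def)
  then have x_in: "x \<in> {0<..qbar}" using x assms by auto
  have "y = x" if y: "y \<in> {0<..qbar}" "?cs y = c" for y
  proof (rule ccontr)
    assume "y \<noteq> x"
    then have "?cs y < ?cs x \<or> ?cs x < ?cs y"
      using consumer_surplus_strict_mono[of y x] consumer_surplus_strict_mono[of x y] x_in y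
      by (cases x y rule: linorder_cases) auto
    then show False using x(3) y(2) by linarith
  qed
  then have "qfloor P c qbar = x"
    unfolding qfloor_def using x(3) x_in by (intro the_equality) blast+
  then show "0 < qfloor P c qbar" "qfloor P c qbar \<le> qbar" "?cs (qfloor P c qbar) = c"
    using x x_in by auto
qed

lemma qeff_spec:
  assumes "P qbar \<le> \<theta>" "\<theta> \<le> P 0" "0 \<le> qbar"
  shows "qeff P qbar \<theta> \<in> {0..qbar}" "P (qeff P qbar \<theta>) = \<theta>"
proof -
  obtain x where x: "x \<in> {0..qbar}" "P x = \<theta>"
    using IVT2'[OF assms P_cont] by auto
  have "y = x" if y: "y \<in> {0..qbar}" "P y = \<theta>" for y
  proof (rule ccontr)
    assume "y \<noteq> x"
    then have "P y < P x \<or> P x < P y"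
      using P_strict_antimono[of x y] P_strict_antimono[of y x] x(1) y(1)
      by (cases x y rule: linorder_cases) auto
    then show False using x(2) y(2) by linarith
  qed
  then have "qeff P qbar \<theta> = x"
    unfolding qeff_def using x by (intro the_equality) blast+
  then show "qeff P qbar \<theta> \<in> {0..qbar}" "P (qeff P qbar \<theta>) = \<theta>" using x by auto
qed

lemma strict_DD_prices:
  assumes "strict_DD P qbar tlo thi q" "\<And>t. t \<in> {tlo..thi} \<Longrightarrow> 0 \<le> q t"
    and "P qbar \<le> tlo" "tlo \<le> thi" "thi \<le> P 0" "0 \<le> qbar"
  shows "P (q tlo) = tlo" "\<And>t. t \<in> {tlo<..thi} \<Longrightarrow> t < P (q t)"
proof -
  have qeff: "qeff P qbar t \<in> {0..qbar}" "P (qeff P qbar t) = t" if "t \<in> {tlo..thi}" for t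
    using qeff_spec[of t] that assms by auto
  show "P (q tlo) = tlo" using assms(1,4) qeff[of tlo] unfolding strict_DD_def by simp
  fix t assume t: "t \<in> {tlo<..thi}"
  then have "q t < qeff P qbar t" using assms(1) unfolding strict_DD_def by blast
  then have "P (qeff P qbar t) < P (q t)"
    using P_strict_antimono[of "q t" "qeff P qbar t"] assms(2)[of t] qeff[of t] t by auto
  then show "t < P (q t)" using qeff[of t] t by simp
qed

lemma TS_gain_le:
  assumes "0 \<le> r'" "0 \<le> q'" "q' \<le> qbar" "q' = 0 \<longrightarrow> r' = 0" "0 < q" "q \<le> qbar"
  shows "r' * TS P c t q' - r * TS P c t q
    \<le> (P q - t) * (q' * r' - q * r) + (r' - r) * (V P q - c - q * P q)"
proof -
  have "r' * V P q' \<le> r' * (V P q + P q * (q' - q))"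
    using V_le_tangent[of q' q] assms by (intro mult_left_mono) auto
  moreover have "r' * TS P c t q' = r' * (V P q' - c) - t * (q' * r')"
    using assms by (cases "q' = 0") (auto simp: TS_def algebra_simps)
  moreover have "r * TS P c t q = r * (V P q - c) - t * (q * r)"
    using assms by (simp add: TS_def algebra_simps)
  ultimately show ?thesis by (simp add: algebra_simps)
qed

end

section \<open>A comparison principle\<close>

text \<open>Summing over a uniform grid of mesh \<open>h\<close> gives \<open>f y \<le> f x + h (g x - g y)\<close>.\<close>

lemma le_of_fine_increments:
  fixes f g :: "real \<Rightarrow> real"
  assumes "x \<le> y"
    and step: "\<And>t t'. x \<le> t \<Longrightarrow> t < t' \<Longrightarrow> t' \<le> y \<Longrightarrow> f t' \<le> f t + (t' - t) * (g t - g t')"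
  shows "f y \<le> f x"
proof (cases "x = y")
  case False
  have grid: "f y \<le> f x + (y - x) / real n * (g x - g y)" if n: "n > 0" for n :: nat
  proof -
    define h where "h = (y - x) / real n"
    have h: "h > 0" "real n * h = y - x" using n False assms(1) by (auto simp: h_def)
    have "f (x + real m * h) \<le> f x + h * (g x - g (x + real m * h))" if "m \<le> n" for m
      using that
    proof (induction m)
      case (Suc m)
      have "real (Suc m) * h \<le> real n * h" using Suc.prems h by (intro mult_right_mono) auto
      then have "f (x + real (Suc m) * h)
          \<le> f (x + real m * h) + h * (g (x + real m * h) - g (x + real (Suc m) * h))"
        using step[of "x + real m * h" "x + real (Suc m) * h"] h by (auto simp: algebra_simps)
      then show ?case using Suc by (simp add: algebra_simps)
    qed simp
    from this[of n] show ?thesis using h by (simp add: h_def)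
  qed
  have "(\<lambda>n. f x + (y - x) / real n * (g x - g y)) \<longlonglongrightarrow> f x"
    by (auto intro!: tendsto_eq_intros lim_const_over_n)
  then show ?thesis
    by (rule LIMSEQ_le_const) (use grid in \<open>auto intro!: exI[of _ 1]\<close>)
qed simp

text \<open>
  If \<open>J a < 0\<close>, the hypotheses make \<open>J x / (s - x)\<close> nonincreasing on \<open>[a, s)\<close> up to the
  variation of \<open>Q\<close>, while it stays above \<open>Q s - Q x\<close>, which tends to \<open>0\<close>.
\<close>

lemma comparison_nonneg_at_start:
  fixes J Q Q' :: "real \<Rightarrow> real"
  assumes "a < s"
    and gap: "\<And>x x'. a \<le> x \<Longrightarrow> x < x' \<Longrightarrow> x' \<le> s \<Longrightarrow> (x' - x) * (Q' x' - Q x) \<le> J x - J x'"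
    and antimono: "\<And>x x'. a \<le> x \<Longrightarrow> x \<le> x' \<Longrightarrow> x' \<le> s \<Longrightarrow> Q x' \<le> Q x"
    and bound: "\<And>x. a \<le> x \<Longrightarrow> x < s \<Longrightarrow> J x \<le> (s - x) * (Q' x - Q x)"
    and at_s: "0 \<le> J s" "Q s \<le> Q' s"
    and lim: "(Q \<longlongrightarrow> Q s) (at_left s)"
  shows "0 \<le> J a"
proof (rule ccontr)
  assume "\<not> 0 \<le> J a"
  define k where "k x = J x / (s - x)" for x
  have "k a < 0" using \<open>\<not> 0 \<le> J a\<close> \<open>a < s\<close> by (simp add: k_def divide_neg_pos)
  have k_le: "k y \<le> k a" if y: "a < y" "y < s" for y
  proof (rule le_of_fine_increments[of a y k "\<lambda>x. Q x / (s - y)"])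
    fix b b' assume b: "a \<le> b" "b < b'" "b' \<le> y"
    define var where "var = (b' - b) * (Q b - Q b')"
    have var: "0 \<le> var" using antimono[of b b'] b y by (simp add: var_def)
    have "J b' / (s - b') \<le> Q' b' - Q b'"
      using bound[of b'] b y by (simp add: pos_divide_le_eq mult.commute)
    then have "(b' - b) * (J b' / (s - b')) \<le> (b' - b) * (Q' b' - Q b')"
      using b by (intro mult_left_mono) auto
    moreover have "J b' + (b' - b) * (J b' / (s - b')) = J b' * (s - b) / (s - b')"
      using b y by (simp add: field_simps)
    moreover have "(b' - b) * (Q' b' - Q b) = (b' - b) * (Q' b' - Q b') - var"
      by (simp add: var_def algebra_simps)
    ultimately have "J b' * (s - b) / (s - b') - var \<le> J b"
      using gap[of b b'] b y by linarith
    then have "(J b' * (s - b) / (s - b') - var) / (s - b) \<le> k b"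
      unfolding k_def using b y by (intro divide_right_mono) auto
    then have "k b' - var / (s - b) \<le> k b"
      using b y by (simp add: k_def field_simps)
    moreover have "var / (s - b) \<le> var / (s - y)"
      using var b y by (intro divide_left_mono) auto
    moreover have "(b' - b) * (Q b / (s - y) - Q b' / (s - y)) = var / (s - y)"
      by (simp add: var_def diff_divide_distrib[symmetric])
    ultimately show "k b' \<le> k b + (b' - b) * (Q b / (s - y) - Q b' / (s - y))"
      by linarith
  qed (use y in auto)
  have k_ge: "Q s - Q y \<le> k y" if y: "a < y" "y < s" for y
  proof -
    have "(s - y) * (Q s - Q y) \<le> (s - y) * (Q' s - Q y)"
      using at_s y by (intro mult_left_mono) auto
    then have "(s - y) * (Q s - Q y) \<le> J y"
      using gap[of y s] at_s y by linarith
    then show ?thesis using y by (simp add: k_def pos_le_divide_eq mult.commute)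
  qed
  have "eventually (\<lambda>y. Q s - Q y \<le> k a) (at_left s)"
    using eventually_at_left_real[OF \<open>a < s\<close>] by eventually_elim (use k_le k_ge in force)
  moreover have "((\<lambda>y. Q s - Q y) \<longlongrightarrow> 0) (at_left s)"
    using tendsto_diff[OF tendsto_const[of "Q s"] lim] by simp
  ultimately have "0 \<le> k a"
    by (intro tendsto_upperbound[OF _ _ trivial_limit_at_left_real])
  with \<open>k a < 0\<close> show False by simp
qed

section \<open>Incentive compatible mechanisms\<close>

lemma IC_inequality:
  "IC tlo thi r q u \<Longrightarrow> t \<in> {tlo..thi} \<Longrightarrow> t' \<in> {tlo..thi} \<Longrightarrow> u t' + (t' - t) * (q t' * r t') \<le> u t"
  unfolding IC_def by (auto simp: mult.assoc)

lemma mechanism_allocation_bounds: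
  assumes "is_mechanism tlo thi qbar r q u" "t \<in> {tlo..thi}"
  shows "0 \<le> q t * r t" "q t * r t \<le> qbar"
proof -
  have "0 \<le> r t" "r t \<le> 1" "0 \<le> q t" "q t \<le> qbar"
    using assms unfolding is_mechanism_def by auto
  then show "0 \<le> q t * r t" "q t * r t \<le> qbar"
    using mult_mono[of "q t" qbar "r t" 1] by auto
qed

lemma IC_allocation_antimono:
  assumes "IC tlo thi r q u" "t \<in> {tlo..thi}" "t' \<in> {tlo..thi}" "t \<le> t'"
  shows "q t' * r t' \<le> q t * r t"
proof (cases "t = t'")
  case False
  have "(t' - t) * (q t' * r t') \<le> (t' - t) * (q t * r t)"
    using IC_inequality[OF assms(1,2,3)] IC_inequality[OF assms(1,3,2)] by (simp add: algebra_simps)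
  then show ?thesis using False assms(4) by simp
qed simp

lemma IC_rent_lipschitz:
  assumes "is_mechanism tlo thi qbar r q u" "IC tlo thi r q u" "0 \<le> qbar"
  shows "qbar-lipschitz_on {tlo..thi} u"
proof (rule lipschitz_onI)
  fix t t' assume t: "t \<in> {tlo..thi}" "t' \<in> {tlo..thi}"
  have "(t' - t) * (q t' * r t') \<le> u t - u t'" "(t - t') * (q t * r t) \<le> u t' - u t"
    using IC_inequality[OF assms(2)] t by (auto simp: algebra_simps)
  moreover have "\<bar>q x * r x\<bar> \<le> qbar" if "x \<in> {tlo..thi}" for x
    using mechanism_allocation_bounds[OF assms(1) that] by simp
  then have "\<bar>(t' - t) * (q t' * r t')\<bar> \<le> qbar * \<bar>t - t'\<bar>" "\<bar>(t - t') * (q t * r t)\<bar> \<le> qbar * \<bar>t - t'\<bar>"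
    using t by (auto simp: abs_mult abs_minus_commute[of t'] mult.commute[of qbar] intro!: mult_left_mono)
  ultimately show "dist (u t) (u t') \<le> qbar * dist t t'"
    unfolding dist_real_def by (auto simp: abs_le_iff)
qed (fact assms(3))

lemma IC_rent_gap:
  assumes "IC tlo thi r q u" "IC tlo thi r' q' u'" "t \<in> {tlo..thi}" "t' \<in> {tlo..thi}"
  shows "(t' - t) * (q' t' * r' t' - q t * r t) \<le> (u' t - u t) - (u' t' - u t')"
  using IC_inequality[OF assms(2,3,4)] IC_inequality[OF assms(1,4,3)] by (simp add: algebra_simps)

section \<open>A weakly dominating mechanism gains nothing\<close>

text \<open>\<open>T1\<close>, \<open>T01\<close>, \<open>T0\<close> and \<open>qh\<close> are the partition and the quantity floor of the
  floor-randomized mechanism \<open>M\<close>; strict downward distortion enters only through the prices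
  \<open>P (q t)\<close>.\<close>

context
  fixes P :: "real \<Rightarrow> real" and c qbar \<alpha> tlo thi qh :: real
    and r q u r' q' u' :: "real \<Rightarrow> real" and T1 T01 T0 :: "real set"
  assumes P_cont: "continuous_on {0..qbar} P"
    and P_strict_antimono: "\<And>x y. 0 \<le> x \<Longrightarrow> x < y \<Longrightarrow> y \<le> qbar \<Longrightarrow> P y < P x"
    and floor: "0 < qh" "qh \<le> qbar" "V P qh - qh * P qh = c"
    and alpha: "0 \<le> \<alpha>" "\<alpha> < 1"
    and Theta: "tlo < thi"
    and mech: "is_mechanism tlo thi qbar r q u" "IC tlo thi r q u" "u thi = 0"
    and partition: "T1 \<union> T01 \<union> T0 = {tlo..thi}"
    and T1: "\<And>t. t \<in> T1 \<Longrightarrow> qh \<le> q t \<and> r t = 1"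
    and T01: "\<And>t. t \<in> T01 \<Longrightarrow> q t = qh \<and> 0 < r t \<and> r t < 1"
    and T0: "\<And>t. t \<in> T0 \<Longrightarrow> q t = 0 \<and> r t = 0"
    and price_tlo: "P (q tlo) = tlo"
    and price_gt: "\<And>t. t \<in> {tlo<..thi} \<Longrightarrow> t < P (q t)"
    and left_cont: "\<And>t. t \<in> {tlo<..thi} \<Longrightarrow> continuous (at_left t) (\<lambda>t. q t * r t)"
    and adm': "admissible tlo thi qbar r' q' u'"
    and dom: "\<And>t. t \<in> {tlo..thi} \<Longrightarrow> RS P c \<alpha> t r q u \<le> RS P c \<alpha> t r' q' u'"
begin

abbreviation "Q t \<equiv> q t * r t"
abbreviation "Q' t \<equiv> q' t * r' t"
abbreviation "J t \<equiv> u' t - u t"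

lemma mech': "is_mechanism tlo thi qbar r' q' u'" "IC tlo thi r' q' u'" "IR tlo thi u'"
  using adm' unfolding admissible_def by auto

lemma rent_gap_IC: "t \<in> {tlo..thi} \<Longrightarrow> t' \<in> {tlo..thi} \<Longrightarrow> (t' - t) * (Q' t' - Q t) \<le> J t - J t'"
  using IC_rent_gap[OF mech(2) mech'(2)] by simp

lemma left_limit_Q: "t \<in> {tlo<..thi} \<Longrightarrow> (Q \<longlongrightarrow> Q t) (at_left t)"
  using left_cont by (simp add: continuous_within)

lemma continuous_on_J: "continuous_on {tlo..thi} J"
proof -
  have "0 \<le> qbar" using mechanism_allocation_bounds[OF mech(1), of tlo] Theta by simp
  then show ?thesis
    using lipschitz_on_continuous_on[OF IC_rent_lipschitz[OF mech(1,2)]]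
      lipschitz_on_continuous_on[OF IC_rent_lipschitz[OF mech'(1,2)]]
    by (intro continuous_on_diff)
qed

lemma no_trade_region:
  assumes "t \<in> T0"
  shows "Q t = 0" "u t = 0" "0 \<le> J t"
proof -
  have t: "t \<in> {tlo..thi}" and thi: "thi \<in> {tlo..thi}" using assms partition Theta by auto
  show "Q t = 0" using T0[OF assms] by simp
  have "0 \<le> (thi - t) * Q thi" "0 \<le> (thi - t) * Q' thi"
    using t mechanism_allocation_bounds[OF mech(1) thi] mechanism_allocation_bounds[OF mech'(1) thi]
    by auto
  then have "u thi \<le> u t" "u' thi \<le> u' t"
    using IC_inequality[OF mech(2) t thi] IC_inequality[OF mech'(2) t thi] by linarith+
  moreover have "u t \<le> u thi" using IC_inequality[OF mech(2) thi t] unfolding \<open>Q t = 0\<close> by simp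
  moreover have "0 \<le> u' thi" using mech'(3) thi unfolding IR_def by blast
  ultimately show "u t = 0" "0 \<le> J t" using mech(3) by auto
qed

lemma tlo_notin_T0: "tlo \<notin> T0"
proof
  assume "tlo \<in> T0"
  then have "P 0 = tlo" using T0 price_tlo by force
  moreover have "P (q thi) \<le> P 0"
    using P_antimono[OF P_cont P_strict_antimono] mech(1) Theta unfolding is_mechanism_def by auto
  ultimately show False using price_gt[of thi] Theta by simp
qed

lemma max_Q_floor_eq:
  assumes "t \<in> {tlo..thi}" "t \<notin> T0"
  shows "max (Q t) qh = q t"
proof (cases "t \<in> T1")
  case False
  then have "q t = qh" "r t < 1" using assms partition T01 by blast+
  moreover have "qh * r t \<le> qh" using floor \<open>r t < 1\<close> by (simp add: mult_le_cancel_left1)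
  ultimately show ?thesis by simp
qed (use T1 in auto)

lemma RS_gain_le:
  assumes "t \<in> {tlo..thi}" "t \<notin> T0"
  shows "RS P c \<alpha> t r' q' u' - RS P c \<alpha> t r q u \<le> (P (q t) - t) * (Q' t - Q t) - (1 - \<alpha>) * J t"
proof -
  have "t \<in> T1 \<or> t \<in> T01" using assms partition by blast
  then have "0 < q t" using T1 T01 floor by force
  have "(r' t - r t) * (V P (q t) - c - q t * P (q t)) \<le> 0"
  proof (cases "t \<in> T1")
    case True
    then have "qh \<le> q t" "r t = 1" using T1 by auto
    then have "c \<le> V P (q t) - q t * P (q t)"
      using consumer_surplus_strict_mono[OF P_cont P_strict_antimono, of qh "q t"] floor mech(1) assms(1)
      unfolding is_mechanism_def by (cases "qh = q t") auto
    moreover have "r' t \<le> 1" using mech'(1) assms(1) unfolding is_mechanism_def by auto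
    ultimately show ?thesis using \<open>r t = 1\<close> by (simp add: mult_nonpos_nonneg)
  next
    case False
    then have "q t = qh" using assms partition T01 by blast
    then have "V P (q t) - c - q t * P (q t) = 0" using floor(3) by simp
    then show ?thesis by simp
  qed
  moreover have "r' t * TS P c t (q' t) - r t * TS P c t (q t)
      \<le> (P (q t) - t) * (Q' t - Q t) + (r' t - r t) * (V P (q t) - c - q t * P (q t))"
  proof (rule TS_gain_le[OF P_cont P_strict_antimono])
    show "0 \<le> r' t" "0 \<le> q' t" "q' t \<le> qbar" "q' t = 0 \<longrightarrow> r' t = 0"
      using mech'(1) assms(1) unfolding is_mechanism_def by auto
    show "0 < q t" "q t \<le> qbar"
      using \<open>0 < q t\<close> mech(1) assms(1) unfolding is_mechanism_def by auto
  qed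
  ultimately show ?thesis unfolding RS_def by (simp add: algebra_simps)
qed

lemma rent_gap_le_dominance:
  assumes "t \<in> {tlo..thi}" "t \<notin> T0"
  shows "(1 - \<alpha>) * J t \<le> (P (q t) - t) * (Q' t - Q t)"
  using RS_gain_le[OF assms] dom[OF assms(1)] by linarith

lemma allocation_gap_nonneg:
  assumes "t \<in> {tlo<..thi}" "0 \<le> J t"
  shows "Q t \<le> Q' t"
proof (cases "t \<in> T0")
  case True
  have "t \<in> {tlo..thi}" using assms(1) by auto
  with True show ?thesis
    using no_trade_region(1) mechanism_allocation_bounds(1)[OF mech'(1)] by force
next
  case False
  have "0 \<le> (1 - \<alpha>) * J t" using alpha assms by simp
  also have "\<dots> \<le> (P (q t) - t) * (Q' t - Q t)" using rent_gap_le_dominance[OF _ False] assms by simp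
  finally have "0 \<le> (P (q t) - t) * (Q' t - Q t)" .
  then show ?thesis using price_gt[OF assms(1)] by (simp add: zero_le_mult_iff)
qed

lemma rent_gap_bound:
  assumes "t \<in> {tlo..thi}" "t \<notin> T0" "J t < 0" "t < s" "s \<le> P (q t)"
  shows "J t \<le> (s - t) * (Q' t - Q t)"
proof (cases "Q t \<le> Q' t")
  case True
  then have "0 \<le> (s - t) * (Q' t - Q t)" using assms(4) by simp
  then show ?thesis using assms(3) by linarith
next
  case False
  have "\<alpha> * J t \<le> 0" using alpha assms(3) by (simp add: mult_nonneg_nonpos)
  moreover have "(1 - \<alpha>) * J t = J t - \<alpha> * J t" by (simp add: algebra_simps)
  ultimately have "J t \<le> (1 - \<alpha>) * J t" by linarith
  also have "\<dots> \<le> (P (q t) - t) * (Q' t - Q t)" by (rule rent_gap_le_dominance[OF assms(1,2)])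
  also have "\<dots> \<le> (s - t) * (Q' t - Q t)" using False assms(5) by (intro mult_right_mono_neg) auto
  finally show ?thesis .
qed

lemma price_eventually_ge:
  assumes s: "s \<in> {tlo<..thi}" and trade: "eventually (\<lambda>x. x \<notin> T0) (at_left s)"
  shows "eventually (\<lambda>x. s \<le> P (q x)) (at_left s)"
proof -
  have "eventually (\<lambda>x. x \<in> {tlo<..<s}) (at_left s)" using s by (intro eventually_at_left_real) auto
  with trade have near: "eventually (\<lambda>x. x \<in> {tlo<..thi} \<and> x \<notin> T0 \<and> max (Q x) qh = q x) (at_left s)"
    by eventually_elim (use s max_Q_floor_eq in auto)
  have Q_lim: "(Q \<longlongrightarrow> Q s) (at_left s)" by (rule left_limit_Q[OF s])
  show ?thesis
  proof (cases "s \<in> T0")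
    case False
    have "((\<lambda>x. P (max (Q x) qh)) \<longlongrightarrow> P (max (Q s) qh)) (at_left s)"
    proof (rule continuous_on_tendsto_compose[OF P_cont tendsto_max[OF Q_lim tendsto_const]])
      show "max (Q s) qh \<in> {0..qbar}"
        using mechanism_allocation_bounds[OF mech(1)] s floor by auto
      show "eventually (\<lambda>x. max (Q x) qh \<in> {0..qbar}) (at_left s)"
        using near by eventually_elim (use mech(1) in \<open>auto simp: is_mechanism_def\<close>)
    qed
    moreover have "s < P (max (Q s) qh)"
      using price_gt[OF s] max_Q_floor_eq[OF _ False] s by auto
    ultimately have "eventually (\<lambda>x. s < P (max (Q x) qh)) (at_left s)"
      by (rule order_tendstoD(1))
    with near show ?thesis by eventually_elim auto
  next
    case True
    have "eventually (\<lambda>x. Q x < qh) (at_left s)"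
      using order_tendstoD(2)[OF Q_lim] no_trade_region(1)[OF True] floor by simp
    with near have floor_near: "eventually (\<lambda>x. x \<in> {tlo<..thi} \<and> q x = qh) (at_left s)"
      by eventually_elim auto
    then have "eventually (\<lambda>x. x \<le> P qh) (at_left s)"
      by eventually_elim (use price_gt in force)
    then have "s \<le> P qh"
      by (rule tendsto_upperbound[OF tendsto_ident_at _ trivial_limit_at_left_real])
    with floor_near show ?thesis by (auto elim: eventually_mono)
  qed
qed

lemma rent_gap_nonneg:
  assumes t: "t \<in> {tlo..thi}"
  shows "0 \<le> J t"
proof (rule ccontr)
  assume "\<not> 0 \<le> J t"
  define S where "S = {x \<in> {t..thi}. 0 \<le> J x}"
  define s where "s = Inf S"
  have "thi \<in> S"
    using mech(3) mech'(3) t unfolding S_def IR_def by auto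
  moreover have "closed S"
    unfolding S_def using t
    by (intro continuous_on_closed_Collect_le continuous_on_subset[OF continuous_on_J]) auto
  moreover have "bdd_below S" unfolding S_def by auto
  ultimately have "s \<in> S" unfolding s_def using closed_contains_Inf by blast
  then have s: "s \<in> {tlo<..thi}" "0 \<le> J s" "t < s"
    using t \<open>\<not> 0 \<le> J t\<close> unfolding S_def by (auto simp: le_less)
  have negative: "J x < 0" if "t \<le> x" "x < s" for x
  proof (rule ccontr)
    assume "\<not> J x < 0"
    then have "x \<in> S" using that s unfolding S_def by auto
    then show False using cInf_lower[OF _ \<open>bdd_below S\<close>] that unfolding s_def by fastforce
  qed
  have "eventually (\<lambda>x. x \<in> {t<..<s}) (at_left s)" using s by (intro eventually_at_left_real)
  moreover from this have "eventually (\<lambda>x. x \<notin> T0) (at_left s)"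
  proof eventually_elim
    case (elim x)
    then have "J x < 0" using negative by simp
    then show ?case using no_trade_region(3)[of x] by (meson not_le)
  qed
  then have "eventually (\<lambda>x. s \<le> P (q x)) (at_left s)"
    by (rule price_eventually_ge[OF s(1)])
  ultimately have "eventually (\<lambda>x. x \<in> {t<..<s} \<and> s \<le> P (q x)) (at_left s)"
    by eventually_elim auto
  then obtain b where "b < s" and b: "\<And>x. b < x \<Longrightarrow> x < s \<Longrightarrow> x \<in> {t<..<s} \<and> s \<le> P (q x)"
    using eventually_at_left[OF \<open>t < s\<close>] by auto
  define a where "a = (max b t + s) / 2"
  have a: "b < a" "t < a" "a < s" using \<open>b < s\<close> \<open>t < s\<close> unfolding a_def by auto
  have in_Theta: "x \<in> {tlo..thi}" if "a \<le> x" "x \<le> s" for x using that a t s by auto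
  have "0 \<le> J a"
  proof (rule comparison_nonneg_at_start[OF \<open>a < s\<close>])
    show "(x' - x) * (Q' x' - Q x) \<le> J x - J x'" if "a \<le> x" "x < x'" "x' \<le> s" for x x'
      using rent_gap_IC in_Theta that by simp
    show "Q x' \<le> Q x" if "a \<le> x" "x \<le> x'" "x' \<le> s" for x x'
      using IC_allocation_antimono[OF mech(2)] in_Theta that by simp
    show "J x \<le> (s - x) * (Q' x - Q x)" if "a \<le> x" "x < s" for x
    proof (rule rent_gap_bound)
      show "J x < 0" using negative a that by simp
      then show "x \<notin> T0" using no_trade_region(3)[of x] by (meson not_le)
    qed (use in_Theta a b that in auto)
    show "Q s \<le> Q' s" using allocation_gap_nonneg s by simp
  qed (use s left_limit_Q in auto)
  then show False using negative[of a] a by simp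
qed

lemma rent_gap_zero:
  assumes t: "t \<in> {tlo..thi}"
  shows "J t = 0"
proof -
  have "J t \<le> J tlo"
  proof (rule le_of_fine_increments[where f = J and g = Q])
    fix b b' assume b: "tlo \<le> b" "b < b'" "b' \<le> t"
    then have "Q b' \<le> Q' b'" using allocation_gap_nonneg rent_gap_nonneg t by auto
    then have "(b' - b) * (Q' b' - Q b) \<ge> (b' - b) * (Q b' - Q b)"
      using b by (intro mult_left_mono) auto
    then show "J b' \<le> J b + (b' - b) * (Q b - Q b')"
      using rent_gap_IC[of b b'] b t by (auto simp: algebra_simps)
  qed (use t in auto)
  moreover have "(1 - \<alpha>) * J tlo \<le> 0"
    using rent_gap_le_dominance[of tlo] tlo_notin_T0 price_tlo Theta by simp
  then have "J tlo \<le> 0" using alpha by (simp add: mult_le_0_iff)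
  ultimately show ?thesis using rent_gap_nonneg[OF t] by simp
qed

lemma allocation_le:
  assumes t: "t \<in> {tlo<..thi}"
  shows "Q' t \<le> Q t"
proof (rule tendsto_lowerbound[OF left_limit_Q[OF t] _ trivial_limit_at_left_real])
  have "eventually (\<lambda>x. x \<in> {tlo<..<t}) (at_left t)" using t by (intro eventually_at_left_real) auto
  then show "eventually (\<lambda>x. Q' t \<le> Q x) (at_left t)"
  proof eventually_elim
    case (elim x)
    then have "(t - x) * (Q' t - Q x) \<le> 0"
      using rent_gap_IC[of x t] rent_gap_zero[of x] rent_gap_zero[of t] t by simp
    then show ?case using elim by (simp add: mult_le_0_iff)
  qed
qed

lemma dominating_RS_le:
  assumes t: "t \<in> {tlo..thi}"
  shows "RS P c \<alpha> t r' q' u' \<le> RS P c \<alpha> t r q u"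
proof (cases "t \<in> T0")
  case False
  have "(P (q t) - t) * (Q' t - Q t) = 0"
  proof (cases "t = tlo")
    case False
    then have "t \<in> {tlo<..thi}" using t by auto
    then show ?thesis
      using allocation_le allocation_gap_nonneg rent_gap_zero t by (simp add: order_antisym)
  qed (simp add: price_tlo)
  moreover have "(1 - \<alpha>) * J t = 0" using rent_gap_zero[OF t] by simp
  ultimately show ?thesis using RS_gain_le[OF t False] by linarith
next
  case True
  then have "t \<noteq> tlo" using tlo_notin_T0 by auto
  then have "t \<in> {tlo<..thi}" using t by auto
  then have "Q' t \<le> Q t" by (rule allocation_le)
  then have "Q' t \<le> 0" using no_trade_region(1)[OF True] by linarith
  then have "r' t = 0"
    using mech'(1) t mechanism_allocation_bounds[OF mech'(1) t]
    unfolding is_mechanism_def by (auto simp: mult_eq_0_iff)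
  moreover have "u' t = 0" using rent_gap_zero[OF t] no_trade_region(2)[OF True] by simp
  ultimately show ?thesis using T0[OF True] no_trade_region(2)[OF True] by (simp add: RS_def)
qed

end

lemma undominatedI:
  assumes "admissible tlo thi qbar r q u"
    and "\<And>r' q' u' t. admissible tlo thi qbar r' q' u' \<Longrightarrow>
      (\<And>t. t \<in> {tlo..thi} \<Longrightarrow> RS P c \<alpha> t r q u \<le> RS P c \<alpha> t r' q' u') \<Longrightarrow>
      t \<in> {tlo..thi} \<Longrightarrow> RS P c \<alpha> t r' q' u' \<le> RS P c \<alpha> t r q u"
  shows "undominated P c qbar \<alpha> tlo thi r q u"
  using assms unfolding undominated_def dominates_def by (meson not_le)

theorem theorem3:
  fixes P :: "real \<Rightarrow> real" and c qbar \<alpha> tlo thi :: real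
    and r q u :: "real \<Rightarrow> real"
  assumes theta: "0 < tlo" "tlo < thi"
    and cpos: "c > 0"
    and qbar: "qbar > 0"
    and Pcont: "continuous_on {0..qbar} P"
    and Pdec: "\<And>x y. 0 \<le> x \<Longrightarrow> x < y \<Longrightarrow> y \<le> qbar \<Longrightarrow> P y < P x"
    and Pnonneg: "\<And>x. 0 \<le> x \<Longrightarrow> x \<le> qbar \<Longrightarrow> P x \<ge> 0"
    and Pzero: "P qbar = 0"
    and A2: "\<exists>qe\<in>{0..qbar}. P qe = thi \<and> TS P c thi qe > 0"
    and alpha: "0 \<le> \<alpha>" "\<alpha> < 1"
    and FR: "floor_randomized P c qbar tlo thi r q u"
    and LC: "left_continuous tlo thi r q"
    and SDD: "strict_DD P qbar tlo thi q"
  shows "undominated P c qbar \<alpha> tlo thi r q u"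
proof -
  obtain T1 T01 T0 where adm: "admissible tlo thi qbar r q u" and "u thi = 0"
    and partition: "T1 \<union> T01 \<union> T0 = {tlo..thi}"
    and T1: "\<And>t. t \<in> T1 \<Longrightarrow> qfloor P c qbar \<le> q t \<and> r t = 1"
    and T01: "\<And>t. t \<in> T01 \<Longrightarrow> q t = qfloor P c qbar \<and> 0 < r t \<and> r t < 1"
    and T0: "\<And>t. t \<in> T0 \<Longrightarrow> q t = 0 \<and> r t = 0"
    using FR unfolding floor_randomized_def by blast
  then have mech: "is_mechanism tlo thi qbar r q u" "IC tlo thi r q u" "u thi = 0"
    unfolding admissible_def by auto
  obtain qe where qe: "qe \<in> {0..qbar}" "P qe = thi" "TS P c (P qe) qe > 0" using A2 by auto
  note floor = qfloor_spec[OF Pcont Pdec cpos qe(1,3)]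
  have "thi \<le> P 0" using P_antimono[OF Pcont Pdec, of 0 qe] qe by simp
  then have prices: "P (q tlo) = tlo" "\<And>t. t \<in> {tlo<..thi} \<Longrightarrow> t < P (q t)"
    using strict_DD_prices[OF Pcont Pdec SDD] mech(1) theta qbar Pzero
    unfolding is_mechanism_def by auto
  show ?thesis
    using undominatedI[OF adm]
      dominating_RS_le[OF Pcont Pdec floor alpha theta(2) mech partition T1 T01 T0 prices]
      LC unfolding left_continuous_def by blast
qed

end
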